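(* Let $N=((V\cup \{s\},A),\tau)$ be a temporal network with $n=|V|+1\ge 1$ vertices such that $\lambda_{N}(s,v)\ge n$ for all $v\in V$. Then $N$ contains two arc-disjoint spanning $\tau$-respecting $s$-arborescences.
   Context: A temporal network is a pair $N=(D,\tau)$ where $D=(V\cup\{s\},A)$ is a directed graph (parallel arcs allowed, cycles allowed) with root $s$ entered by no arc, and $\tau:A\to\mathbb{N}$. A directed path with arcs $a_1,\dots,a_\ell$ in order is $\tau$-respecting if $\tau(a_1)\le\dots\le\tau(a_\ell)$; $\lambda_N(s,v)$ is the maximum number of pairwise arc-disjoint $\tau$-respecting $(s,v)$-paths. An $s$-arborescence is an acyclic subgraph $F=(V'\cup\{s\},A')$ in which every vertex of $V'$ has in-degree exactly $1$; it is spanning if $V'=V$, and $\tau$-respecting if for every $v\in V'$ the unique $(s,v)$-path in $F$ is $\tau$-respecting. *)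

theory Defs
  imports Main
begin

text \<open>A temporal network: vertex set V plus root s (s not in V), finite arc set A
  (arcs are abstract objects, so parallel arcs are allowed), tail map tl_of,
  head map hd_of, time labels tau. No arc enters s.\<close>

definition temporal_network ::
  "'v set \<Rightarrow> 'v \<Rightarrow> 'a set \<Rightarrow> ('a \<Rightarrow> 'v) \<Rightarrow> ('a \<Rightarrow> 'v) \<Rightarrow> bool" where
  "temporal_network V s A tl_of hd_of \<longleftrightarrow>
     finite V \<and> s \<notin> V \<and> finite A \<and>
     (\<forall>a\<in>A. tl_of a \<in> V \<union> {s} \<and> hd_of a \<in> V)"

definition is_walk ::
  "'a set \<Rightarrow> ('a \<Rightarrow> 'v) \<Rightarrow> ('a \<Rightarrow> 'v) \<Rightarrow> 'v \<Rightarrow> 'a list \<Rightarrow> 'v \<Rightarrow> bool" where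
  "is_walk B tl_of hd_of u p v \<longleftrightarrow>
     p \<noteq> [] \<and> set p \<subseteq> B \<and> tl_of (p ! 0) = u \<and> hd_of (last p) = v \<and>
     (\<forall>i. Suc i < length p \<longrightarrow> hd_of (p ! i) = tl_of (p ! Suc i))"

definition is_path ::
  "'a set \<Rightarrow> ('a \<Rightarrow> 'v) \<Rightarrow> ('a \<Rightarrow> 'v) \<Rightarrow> 'v \<Rightarrow> 'a list \<Rightarrow> 'v \<Rightarrow> bool" where
  "is_path B tl_of hd_of u p v \<longleftrightarrow>
     is_walk B tl_of hd_of u p v \<and> distinct (tl_of (p ! 0) # map hd_of p)"

definition tau_respecting :: "('a \<Rightarrow> nat) \<Rightarrow> 'a list \<Rightarrow> bool" where
  "tau_respecting tau p \<longleftrightarrow> sorted (map tau p)"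

definition temporal_lambda ::
  "'a set \<Rightarrow> ('a \<Rightarrow> 'v) \<Rightarrow> ('a \<Rightarrow> 'v) \<Rightarrow> ('a \<Rightarrow> nat) \<Rightarrow> 'v \<Rightarrow> 'v \<Rightarrow> nat" where
  "temporal_lambda A tl_of hd_of tau s v =
     Max {k. \<exists>P :: 'a list list. length P = k \<and>
              (\<forall>i<k. is_path A tl_of hd_of s (P ! i) v \<and> tau_respecting tau (P ! i)) \<and>
              (\<forall>i<k. \<forall>j<k. i \<noteq> j \<longrightarrow> set (P ! i) \<inter> set (P ! j) = {})}"

definition spanning_tau_arborescence ::
  "'v set \<Rightarrow> 'v \<Rightarrow> 'a set \<Rightarrow> ('a \<Rightarrow> 'v) \<Rightarrow> ('a \<Rightarrow> 'v) \<Rightarrow> ('a \<Rightarrow> nat) \<Rightarrow> 'a set \<Rightarrow> bool" where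
  "spanning_tau_arborescence V s A tl_of hd_of tau F \<longleftrightarrow>
     F \<subseteq> A \<and>
     \<not> (\<exists>u p. is_walk F tl_of hd_of u p u) \<and>
     (\<forall>v\<in>V. card {a\<in>F. hd_of a = v} = 1) \<and>
     (\<forall>v\<in>V. \<forall>p. is_path F tl_of hd_of s p v \<longrightarrow> tau_respecting tau p)"

end

theory Submission
  imports Defs "HOL-Library.Product_Lexorder"
begin

text \<open>If every vertex is reachable from s by a \<open>\<tau>\<close>-respecting walk, a spanning
  \<open>\<tau>\<close>-respecting arborescence exists: give each vertex v the last arc of a \<open>\<tau>\<close>-respecting
  (s,v)-walk that arrives as early as possible and, among those, has fewest arcs. Dropping
  that arc leaves such a walk to its tail, so the key (arrival time, length) strictly decreases
  towards the root along parent arcs; this rules out cycles and makes the tree paths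
  \<open>\<tau>\<close>-respecting. Any spanning arborescence has exactly |V| = n - 1 arcs, so with
  \<open>\<lambda>(s,v) \<ge> n\<close> some of the arc-disjoint paths to each v avoids it, and the construction can
  be repeated in the remaining arcs.\<close>

definition tau_reachable ::
  "'a set \<Rightarrow> ('a \<Rightarrow> 'v) \<Rightarrow> ('a \<Rightarrow> 'v) \<Rightarrow> ('a \<Rightarrow> nat) \<Rightarrow> 'v \<Rightarrow> 'v \<Rightarrow> bool" where
  "tau_reachable B tl_of hd_of tau s v \<longleftrightarrow>
     (\<exists>p. is_walk B tl_of hd_of s p v \<and> tau_respecting tau p)"

lemma is_walk_snoc:
  assumes "q \<noteq> []"
  shows "is_walk B tl_of hd_of u (q @ [a]) v \<longleftrightarrow>
         is_walk B tl_of hd_of u q (tl_of a) \<and> a \<in> B \<and> hd_of a = v"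
proof -
  have "(\<forall>i. Suc i < length (q @ [a]) \<longrightarrow> hd_of ((q @ [a]) ! i) = tl_of ((q @ [a]) ! Suc i)) \<longleftrightarrow>
        (\<forall>i. Suc i < length q \<longrightarrow> hd_of (q ! i) = tl_of (q ! Suc i)) \<and> hd_of (last q) = tl_of a"
    (is "?l \<longleftrightarrow> ?r")
  proof
    assume ?l
    then show ?r using assms
      by (auto simp: nth_append last_conv_nth dest: spec[of _ "length q - 1"])
  next
    assume ?r
    then show ?l using assms
      by (auto simp: nth_append last_conv_nth less_Suc_eq) (metis diff_Suc_1 One_nat_def)
  qed
  then show ?thesis
    using assms unfolding is_walk_def by (auto simp: nth_append)
qed

lemma tau_respecting_snoc:
  "tau_respecting tau (q @ [a]) \<longleftrightarrow> tau_respecting tau q \<and> (q \<noteq> [] \<longrightarrow> tau (last q) \<le> tau a)"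
  unfolding tau_respecting_def
  by (induction q rule: rev_induct) (auto simp: sorted_append)

lemma is_walk_mono:
  "is_walk B tl_of hd_of u p v \<Longrightarrow> set p \<subseteq> B' \<Longrightarrow> is_walk B' tl_of hd_of u p v"
  unfolding is_walk_def by auto

lemma ex_least_key:
  fixes key :: "'a \<Rightarrow> 'b::wellorder"
  assumes "x \<in> S"
  shows "\<exists>y\<in>S. \<forall>z\<in>S. key y \<le> key z"
proof -
  have "(LEAST k. k \<in> key ` S) \<in> key ` S"
    using assms by (intro LeastI) auto
  then obtain y where y: "y \<in> S" "key y = (LEAST k. k \<in> key ` S)"
    by auto
  have "key y \<le> key z" if "z \<in> S" for z
    unfolding y(2) using that by (intro Least_le) auto
  then show ?thesis
    using y(1) by blast
qed

lemma spanning_tau_arborescence_of_parent: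
  fixes m :: "'v \<Rightarrow> 'b::order"
  assumes parent: "\<And>v. v \<in> V \<Longrightarrow> par v \<in> B \<and> hd_of (par v) = v"
    and descent: "\<And>v. v \<in> V \<Longrightarrow> tl_of (par v) \<in> V \<Longrightarrow>
                   m (tl_of (par v)) < m v \<and> tau (par (tl_of (par v))) \<le> tau (par v)"
  shows "spanning_tau_arborescence V s B tl_of hd_of tau (par ` V)"
proof -
  let ?F = "par ` V"
  have link: "m (hd_of b) < m (hd_of c) \<and> tau b \<le> tau c"
    if "b \<in> ?F" "c \<in> ?F" "hd_of b = tl_of c" for b c
    using that parent descent by auto
  have chain: "m (hd_of (p ! i)) < m (hd_of (p ! Suc i)) \<and> tau (p ! i) \<le> tau (p ! Suc i)"
    if "is_walk ?F tl_of hd_of u p w" "Suc i < length p" for u p w i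
    using that unfolding is_walk_def by (intro link) auto
  have acyclic: "\<not> is_walk ?F tl_of hd_of u p u" for u p
  proof
    assume walk: "is_walk ?F tl_of hd_of u p u"
    then have "p \<noteq> []" and last_p: "hd_of (last p) = u" and first_p: "tl_of (p ! 0) = u"
      unfolding is_walk_def by auto
    have closing: "m (hd_of (last p)) < m (hd_of (p ! 0))"
    proof (rule link[THEN conjunct1])
      show "last p \<in> ?F" "p ! 0 \<in> ?F"
        using walk \<open>p \<noteq> []\<close> unfolding is_walk_def by auto
    qed (use last_p first_p in simp)
    define ys where "ys = map (m \<circ> hd_of) (last p # p)"
    have "sorted_wrt (<) ys"
      unfolding ys_def sorted_wrt_iff_nth_Suc_transp[OF transp_on_less]
    proof (intro allI impI)
      fix i assume "Suc i < length (map (m \<circ> hd_of) (last p # p))"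
      then show "map (m \<circ> hd_of) (last p # p) ! i < map (m \<circ> hd_of) (last p # p) ! Suc i"
        using chain[OF walk, of "i - 1"] closing by (cases i) auto
    qed
    then have "ys ! 0 < ys ! length p"
      unfolding ys_def by (rule sorted_wrt_nth_less) (use \<open>p \<noteq> []\<close> in auto)
    then show False
      using \<open>p \<noteq> []\<close> by (simp add: ys_def last_conv_nth)
  qed
  have in_degree: "{a \<in> ?F. hd_of a = v} = {par v}" if "v \<in> V" for v
    using that parent by auto
  have "tau_respecting tau p" if "is_path ?F tl_of hd_of s p v" for p v
    using chain that unfolding is_path_def tau_respecting_def sorted_iff_nth_Suc by auto
  then show ?thesis
    unfolding spanning_tau_arborescence_def using parent acyclic in_degree by auto
qed

lemma spanning_tau_arborescence_exists:
  assumes "s \<notin> V" and tails: "\<forall>a\<in>B. tl_of a \<in> V \<union> {s}"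
    and reach: "\<forall>v\<in>V. tau_reachable B tl_of hd_of tau s v"
  shows "\<exists>F. spanning_tau_arborescence V s B tl_of hd_of tau F"
proof -
  define W where "W v = {p. is_walk B tl_of hd_of s p v \<and> tau_respecting tau p}" for v
  define key where "key p = (tau (last p), length p)" for p
  have "\<exists>p\<in>W v. \<forall>q\<in>W v. key p \<le> key q" if v: "v \<in> V" for v
  proof -
    obtain p where "p \<in> W v"
      using reach v unfolding tau_reachable_def W_def by auto
    then show ?thesis
      by (rule ex_least_key)
  qed
  then obtain pv where "\<forall>v\<in>V. pv v \<in> W v \<and> (\<forall>q\<in>W v. key (pv v) \<le> key q)"
    using bchoice[of V "\<lambda>v p. p \<in> W v \<and> (\<forall>q\<in>W v. key p \<le> key q)"] by blast
  then have pv: "\<And>v. v \<in> V \<Longrightarrow> pv v \<in> W v"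
    and pv_least: "\<And>v q. v \<in> V \<Longrightarrow> q \<in> W v \<Longrightarrow> key (pv v) \<le> key q"
    by auto
  define par where "par v = last (pv v)" for v
  have parent: "par v \<in> B \<and> hd_of (par v) = v" if "v \<in> V" for v
    using pv[OF that] unfolding W_def par_def is_walk_def by auto
  have descent: "key (pv (tl_of (par v))) < key (pv v) \<and> tau (par (tl_of (par v))) \<le> tau (par v)"
    if v: "v \<in> V" and w: "tl_of (par v) \<in> V" for v
  proof -
    define q where "q = butlast (pv v)"
    have walk: "is_walk B tl_of hd_of s (q @ [par v]) v" and resp: "tau_respecting tau (q @ [par v])"
      using pv[OF v] unfolding W_def q_def par_def is_walk_def by auto
    have "q \<noteq> []"
    proof
      assume "q = []"
      then have "tl_of (par v) = s"
        using walk unfolding is_walk_def by simp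
      then show False
        using w \<open>s \<notin> V\<close> by simp
    qed
    then have "q \<in> W (tl_of (par v))" and "tau (last q) \<le> tau (par v)"
      using walk resp unfolding W_def by (auto simp: is_walk_snoc tau_respecting_snoc)
    then have "key (pv (tl_of (par v))) \<le> key q" and "key q < key (q @ [par v])"
      using pv_least[OF w] by (auto simp: key_def)
    moreover have "q @ [par v] = pv v"
      using pv[OF v] unfolding q_def par_def W_def is_walk_def by simp
    ultimately have "key (pv (tl_of (par v))) < key (pv v)"
      by simp
    then show ?thesis
      unfolding key_def par_def by auto
  qed
  show ?thesis
    using spanning_tau_arborescence_of_parent[of V par B hd_of tl_of "\<lambda>v. key (pv v)" tau s]
      parent descent by blast
qed

lemma spanning_tau_arborescence_mono:
  "spanning_tau_arborescence V s B tl_of hd_of tau F \<Longrightarrow> B \<subseteq> A \<Longrightarrow>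
   spanning_tau_arborescence V s A tl_of hd_of tau F"
  unfolding spanning_tau_arborescence_def by blast

lemma card_spanning_tau_arborescence:
  assumes "temporal_network V s A tl_of hd_of"
    and "spanning_tau_arborescence V s A tl_of hd_of tau F"
  shows "card F = card V"
proof -
  have heads: "\<forall>a\<in>A. hd_of a \<in> V" and "finite V" and F: "F \<subseteq> A"
    and in_degree: "\<forall>v\<in>V. card {a\<in>F. hd_of a = v} = 1"
    using assms unfolding temporal_network_def spanning_tau_arborescence_def by auto
  have "F = (\<Union>v\<in>V. {a\<in>F. hd_of a = v})"
    using heads F by auto
  also have "card \<dots> = (\<Sum>v\<in>V. card {a\<in>F. hd_of a = v})"
  proof (rule card_UN_disjoint)
    show "\<forall>v\<in>V. finite {a\<in>F. hd_of a = v}"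
      using in_degree by (auto intro: card_ge_0_finite)
  qed (use \<open>finite V\<close> in auto)
  also have "\<dots> = card V"
    using in_degree by simp
  finally show ?thesis .
qed

lemma card_le_if_disjoint_family_meets:
  assumes "finite X"
    and meets: "\<And>i. i < k \<Longrightarrow> Q i \<inter> X \<noteq> {}"
    and disjoint: "\<And>i j. i < k \<Longrightarrow> j < k \<Longrightarrow> i \<noteq> j \<Longrightarrow> Q i \<inter> Q j = {}"
  shows "k \<le> card X"
proof -
  define f where "f i = (SOME x. x \<in> Q i \<inter> X)" for i
  have f: "f i \<in> Q i \<inter> X" if "i < k" for i
    unfolding f_def some_in_eq using meets[OF that] .
  have "inj_on f {..<k}"
  proof (rule inj_onI)
    fix i j assume "i \<in> {..<k}" "j \<in> {..<k}" "f i = f j"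
    then show "i = j"
      using f[of i] f[of j] disjoint[of i j] by auto
  qed
  moreover have "f ` {..<k} \<subseteq> X"
    using f by auto
  ultimately have "card {..<k} \<le> card X"
    using \<open>finite X\<close> by (intro card_inj_on_le)
  then show ?thesis
    by simp
qed

lemma temporal_lambda_attained:
  assumes "finite A"
  obtains P where "length P = temporal_lambda A tl_of hd_of tau s v"
    and "\<forall>i<length P. is_path A tl_of hd_of s (P ! i) v \<and> tau_respecting tau (P ! i)"
    and "\<forall>i<length P. \<forall>j<length P. i \<noteq> j \<longrightarrow> set (P ! i) \<inter> set (P ! j) = {}"
proof -
  define S where "S = {k. \<exists>P :: 'a list list. length P = k \<and>
              (\<forall>i<k. is_path A tl_of hd_of s (P ! i) v \<and> tau_respecting tau (P ! i)) \<and>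
              (\<forall>i<k. \<forall>j<k. i \<noteq> j \<longrightarrow> set (P ! i) \<inter> set (P ! j) = {})}"
  have "k \<le> card A" if "k \<in> S" for k
  proof -
    obtain P where "length P = k" and paths: "\<forall>i<k. is_path A tl_of hd_of s (P ! i) v"
      and "\<forall>i<k. \<forall>j<k. i \<noteq> j \<longrightarrow> set (P ! i) \<inter> set (P ! j) = {}"
      using \<open>k \<in> S\<close> unfolding S_def by auto
    moreover have "set (P ! i) \<inter> A \<noteq> {}" if "i < k" for i
    proof -
      have "P ! i \<noteq> []" "set (P ! i) \<subseteq> A"
        using paths that unfolding is_path_def is_walk_def by auto
      then show ?thesis
        by (simp add: Int_absorb2)
    qed
    ultimately show ?thesis
      using card_le_if_disjoint_family_meets[OF \<open>finite A\<close>, of k "\<lambda>i. set (P ! i)"] by blast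
  qed
  then have "finite S"
    by (meson finite_atMost atMost_iff finite_subset subsetI)
  moreover have "0 \<in> S"
    unfolding S_def by auto
  ultimately have "Max S \<in> S"
    by (intro Max_in) auto
  then obtain P where "length P = Max S"
    and "\<forall>i<length P. is_path A tl_of hd_of s (P ! i) v \<and> tau_respecting tau (P ! i)"
    and "\<forall>i<length P. \<forall>j<length P. i \<noteq> j \<longrightarrow> set (P ! i) \<inter> set (P ! j) = {}"
    unfolding S_def by auto
  moreover have "Max S = temporal_lambda A tl_of hd_of tau s v"
    unfolding S_def temporal_lambda_def ..
  ultimately show ?thesis
    using that by simp
qed

lemma tau_reachable_avoiding:
  assumes "finite A" "finite X" and lambda: "card X < temporal_lambda A tl_of hd_of tau s v"
  shows "tau_reachable (A - X) tl_of hd_of tau s v"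
proof -
  obtain P where len: "length P = temporal_lambda A tl_of hd_of tau s v"
    and paths: "\<forall>i<length P. is_path A tl_of hd_of s (P ! i) v \<and> tau_respecting tau (P ! i)"
    and disjoint: "\<forall>i<length P. \<forall>j<length P. i \<noteq> j \<longrightarrow> set (P ! i) \<inter> set (P ! j) = {}"
    using temporal_lambda_attained[OF \<open>finite A\<close>] .
  obtain i where i: "i < length P" "set (P ! i) \<inter> X = {}"
    using card_le_if_disjoint_family_meets[OF \<open>finite X\<close>, of "length P" "\<lambda>i. set (P ! i)"]
      disjoint len lambda by fastforce
  have "is_walk A tl_of hd_of s (P ! i) v" and "tau_respecting tau (P ! i)"
    using paths i(1) unfolding is_path_def by auto
  moreover from this have "set (P ! i) \<subseteq> A - X"
    using i(2) unfolding is_walk_def by auto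
  ultimately show ?thesis
    unfolding tau_reachable_def by (blast intro: is_walk_mono)
qed

theorem mainTheorem9:
  fixes V :: "'v set" and s :: 'v and A :: "'a set"
    and tl_of hd_of :: "'a \<Rightarrow> 'v" and tau :: "'a \<Rightarrow> nat"
  assumes "temporal_network V s A tl_of hd_of"
    and "\<forall>v\<in>V. temporal_lambda A tl_of hd_of tau s v \<ge> card V + 1"
  shows "\<exists>F1 F2. spanning_tau_arborescence V s A tl_of hd_of tau F1 \<and>
                 spanning_tau_arborescence V s A tl_of hd_of tau F2 \<and> F1 \<inter> F2 = {}"
proof -
  have "s \<notin> V" "finite A" and tails: "\<forall>a\<in>A. tl_of a \<in> V \<union> {s}"
    using assms(1) unfolding temporal_network_def by auto
  have avoid: "\<forall>v\<in>V. tau_reachable (A - X) tl_of hd_of tau s v"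
    if "finite X" "card X \<le> card V" for X
  proof
    fix v assume "v \<in> V"
    then have "card X < temporal_lambda A tl_of hd_of tau s v"
      using assms(2) that(2) by fastforce
    then show "tau_reachable (A - X) tl_of hd_of tau s v"
      by (rule tau_reachable_avoiding[OF \<open>finite A\<close> \<open>finite X\<close>])
  qed
  obtain F1 where F1: "spanning_tau_arborescence V s A tl_of hd_of tau F1"
    using spanning_tau_arborescence_exists[OF \<open>s \<notin> V\<close> tails avoid[of "{}", simplified]]
    by blast
  then have "finite F1" "card F1 = card V"
    using \<open>finite A\<close> card_spanning_tau_arborescence[OF assms(1)]
    unfolding spanning_tau_arborescence_def by (auto intro: finite_subset)
  then have "\<forall>v\<in>V. tau_reachable (A - F1) tl_of hd_of tau s v"
    using avoid by simp
  moreover have "\<forall>a\<in>A - F1. tl_of a \<in> V \<union> {s}"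
    using tails by blast
  ultimately obtain F2 where F2: "spanning_tau_arborescence V s (A - F1) tl_of hd_of tau F2"
    using spanning_tau_arborescence_exists[OF \<open>s \<notin> V\<close>] by blast
  then have "F1 \<inter> F2 = {}"
    unfolding spanning_tau_arborescence_def by blast
  then show ?thesis
    using F1 F2 spanning_tau_arborescence_mono[OF F2] by blast
qed

end
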